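(* Let $a,c,p\in\mathbb{C}$ with $-c\notin\mathbb{N}\cup\{0\}$ and $c\neq2$. Write $\cos(pz)M(a,c;z)=\sum_{n=0}^\infty u_nz^n$, $z\in\mathbb{C}$. Then $u_0=1$, $u_1=\frac ac$, $u_2=\frac12\left(\frac{a^2+a}{c^2+c}-p^2\right)$, $u_3=\frac{a}{6c}\left(\frac{(a+1)(a+2)}{(c+1)(c+2)}-3p^2\right)$, \[ u_4=\frac1{24}\left(-\frac{6a(a+1)p^2}{c(c+1)}+\frac{a(a+1)(a+2)(a+3)}{c(c+1)(c+2)(c+3)}+p^4\right), \] \[ u_5=\frac{a}{120c}\left(-\frac{10(a+1)(a+2)p^2}{(c+1)(c+2)}+\frac{(a+1)(a+2)(a+3)(a+4)}{(c+1)(c+2)(c+3)(c+4)}+5p^4\right), \] and for all integers $n\ge5$, \[ u_{n+1}=\sum_{i=0}^5\beta_i(n)u_{n-i}, \] where, with $D(n)=(c-2)c\,n(n+1)(c+n-1)(c+n)$, \[ \beta_0(n)=\frac{2\left(a\left(c^2-2cn+c-2(n-2)^2\right)+c(n-1)(2c+n-5)\right)}{(c-2)c(n+1)(c+n)}, \] \[ \beta_1(n)=\frac{1}{D(n)}\Big[-(n-4)(n-3)(n-2)(n-1)(4p^2+1)+2(n-3)(n-2)(n-1)\big(4a-c(4p^2+3)\big) +(n-2)(n-1)\big(8a^2+a(4c+6)-6c((c-2)p^2+c)+c\big) +2(n-1)\big(a^2(4c-2)-3a(c-1)c+c(-c^2+c+2)p^2\big) -(c-2)\big(a^2(c+2)-ac+c^2(c+1)p^2\big)\Big],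 \] \[ \beta_2(n)=\frac{1}{D(n)}\Big[-2p^2(c-3)\big(a(3c+8)-2c^2+c-32\big)+2p^2\big(n(-10a+c(3c-31)+104)+6(c-6)n^2+4n^3\big) -2(a+n-3)\big(2a^2-a(c-2n+3)-(n-2)(2c+n-4)\big)\Big], \] \[ \beta_3(n)=-\frac{1}{D(n)}\Big[p^2\big(12a^2-2a(6c+5)+c(6c-1)\big)+2(n-3)\big(a+c(4p^2+3)p^2\big) +(a-1)a+5(c-2)cp^4+(n-4)(n-3)(8p^4+6p^2+1)\Big], \] \[ \beta_4(n)=\frac{2p^2\left(p^2(-6a+5c+4(n-4))-3a+2c+n-4\right)}{D(n)},\qquad \beta_5(n)=-\frac{p^2(4p^4+5p^2+1)}{D(n)}. \]
   Context: For $a\in\mathbb{C}$, $(a)_n=a(a+1)\cdots(a+n-1)$ denotes the Pochhammer symbol, with $(a)_0=1$. For $a,c\in\mathbb{C}$ with $-c\notin\mathbb{N}\cup\{0\}$, the confluent hypergeometric (Kummer) function is $M(a,c;z)=\sum_{n=0}^\infty \frac{(a)_n}{(c)_n\,n!}z^n$, $z\in\mathbb{C}$. *)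

theory Defs
  imports "HOL-Analysis.Analysis"
begin

definition kummerM :: "complex \<Rightarrow> complex \<Rightarrow> complex \<Rightarrow> complex" where
  "kummerM a c z = (\<Sum>n. pochhammer a n / (pochhammer c n * fact n) * z ^ n)"

definition Dn :: "complex \<Rightarrow> nat \<Rightarrow> complex" where
  "Dn c n = (let x = of_nat n in (c - 2) * c * x * (x + 1) * (c + x - 1) * (c + x))"

definition beta0 :: "complex \<Rightarrow> complex \<Rightarrow> complex \<Rightarrow> nat \<Rightarrow> complex" where
  "beta0 a c p n = (let x = of_nat n in
     2 * (a * (c^2 - 2*c*x + c - 2*(x - 2)^2) + c*(x - 1)*(2*c + x - 5))
     / ((c - 2) * c * (x + 1) * (c + x)))"

definition beta1 :: "complex \<Rightarrow> complex \<Rightarrow> complex \<Rightarrow> nat \<Rightarrow> complex" where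
  "beta1 a c p n = (let x = of_nat n in
     (- (x - 4)*(x - 3)*(x - 2)*(x - 1)*(4*p^2 + 1)
      + 2*(x - 3)*(x - 2)*(x - 1)*(4*a - c*(4*p^2 + 3))
      + (x - 2)*(x - 1)*(8*a^2 + a*(4*c + 6) - 6*c*((c - 2)*p^2 + c) + c)
      + 2*(x - 1)*(a^2*(4*c - 2) - 3*a*(c - 1)*c + c*(- (c^2) + c + 2)*p^2)
      - (c - 2)*(a^2*(c + 2) - a*c + c^2*(c + 1)*p^2)) / Dn c n)"

definition beta2 :: "complex \<Rightarrow> complex \<Rightarrow> complex \<Rightarrow> nat \<Rightarrow> complex" where
  "beta2 a c p n = (let x = of_nat n in
     (- 2*p^2*(c - 3)*(a*(3*c + 8) - 2*c^2 + c - 32)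
      + 2*p^2*(x*(- 10*a + c*(3*c - 31) + 104) + 6*(c - 6)*x^2 + 4*x^3)
      - 2*(a + x - 3)*(2*a^2 - a*(c - 2*x + 3) - (x - 2)*(2*c + x - 4))) / Dn c n)"

definition beta3 :: "complex \<Rightarrow> complex \<Rightarrow> complex \<Rightarrow> nat \<Rightarrow> complex" where
  "beta3 a c p n = (let x = of_nat n in
     - (p^2*(12*a^2 - 2*a*(6*c + 5) + c*(6*c - 1))
        + 2*(x - 3)*(a + c*(4*p^2 + 3)*p^2)
        + (a - 1)*a + 5*(c - 2)*c*p^4
        + (x - 4)*(x - 3)*(8*p^4 + 6*p^2 + 1)) / Dn c n)"

definition beta4 :: "complex \<Rightarrow> complex \<Rightarrow> complex \<Rightarrow> nat \<Rightarrow> complex" where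
  "beta4 a c p n = (let x = of_nat n in
     2*p^2*(p^2*(- 6*a + 5*c + 4*(x - 4)) - 3*a + 2*c + x - 4) / Dn c n)"

definition beta5 :: "complex \<Rightarrow> complex \<Rightarrow> complex \<Rightarrow> nat \<Rightarrow> complex" where
  "beta5 a c p n = - (p^2*(4*p^4 + 5*p^2 + 1)) / Dn c n"

end

(*
  Write cos (p z) = (e^(i p z) + e^(-i p z)) / 2.  For every q the function f = e^(q z) M(a,c;z)
  satisfies the transformed Kummer equation
      z f'' + (c - (1 + 2 q) z) f' + (q (q + 1) z - (q c + a)) f = 0,
  so its Taylor coefficients obey a three-term recurrence whose coefficients involve q.
  Five consecutive instances of that recurrence combine, with multipliers polynomial in q,
  into a six-term recurrence whose coefficients depend on q only through q^2.  For q = i p and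
  q = -i p this is the recurrence with the coefficients beta_i, and by linearity it passes to
  the coefficients u_n of the half-sum.  The initial coefficients u_0, ..., u_5 are read off
  the Cauchy product of the two series.
*)
theory Submission
  imports Defs
begin

lemma add_of_nat_neq_0:
  assumes "\<forall>k::nat. - c \<noteq> of_nat k"
  shows "c + of_nat n \<noteq> (0::'a::ring_1)"
  using assms by (metis add.commute add_eq_0_iff)

definition kummer_coeff :: "complex \<Rightarrow> complex \<Rightarrow> nat \<Rightarrow> complex" where
  "kummer_coeff a c n = pochhammer a n / (pochhammer c n * fact n)"

definition kummer_fps :: "complex \<Rightarrow> complex \<Rightarrow> complex fps" where
  "kummer_fps a c = Abs_fps (kummer_coeff a c)"

lemma kummer_coeff_Suc:
  assumes "\<forall>k::nat. - c \<noteq> of_nat k"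
  shows "kummer_coeff a c (Suc n)
           = (a + of_nat n) / ((of_nat n + 1) * (c + of_nat n)) * kummer_coeff a c n"
proof -
  have "pochhammer c n \<noteq> 0" "c + of_nat n \<noteq> 0"
    using assms add_of_nat_neq_0 by (auto simp: pochhammer_eq_0_iff)
  then show ?thesis
    by (simp add: kummer_coeff_def pochhammer_rec' field_simps)
qed

lemma kummer_coeff_initial:
  shows "kummer_coeff a c 0 = 1"
    and "kummer_coeff a c 1 = a / c"
    and "kummer_coeff a c 2 = a*(a + 1) / (c*(c + 1)*2)"
    and "kummer_coeff a c 3 = a*(a + 1)*(a + 2) / (c*(c + 1)*(c + 2)*6)"
    and "kummer_coeff a c 4 = a*(a + 1)*(a + 2)*(a + 3) / (c*(c + 1)*(c + 2)*(c + 3)*24)"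
    and "kummer_coeff a c 5 = a*(a + 1)*(a + 2)*(a + 3)*(a + 4) / (c*(c + 1)*(c + 2)*(c + 3)*(c + 4)*120)"
  by (simp_all add: kummer_coeff_def eval_nat_numeral pochhammer_Suc fact_Suc algebra_simps)

lemma kummer_ratio_tendsto_0:
  fixes a c :: "'a::real_normed_field"
  shows "(\<lambda>n. (a + of_nat n) / ((of_nat n + 1) * (c + of_nat n))) \<longlonglongrightarrow> 0"
proof -
  have to_infinity: "filterlim (\<lambda>n. d + of_nat n :: 'a) at_infinity sequentially" for d
    by (rule tendsto_add_filterlim_at_infinity[OF tendsto_const tendsto_of_nat])
  have "(\<lambda>n. 1 + (a - 1) / (1 + of_nat n)) \<longlonglongrightarrow> 1 + 0"
    by (intro tendsto_add tendsto_const tendsto_divide_0[OF tendsto_const to_infinity])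
  then have "(\<lambda>n. (1 + (a - 1) / (1 + of_nat n)) / (c + of_nat n)) \<longlonglongrightarrow> 0"
    by (intro tendsto_divide_0 to_infinity) simp
  moreover have "(1 + (a - 1) / (1 + of_nat n)) / (c + of_nat n)
      = (a + of_nat n) / ((of_nat n + 1) * (c + of_nat n))" for n
  proof -
    have "1 + of_nat n \<noteq> (0::'a)"
      using of_nat_neq_0[of n] by simp
    then show ?thesis by (simp add: field_simps)
  qed
  ultimately show ?thesis by simp
qed

lemma summable_kummer_series:
  assumes hc: "\<forall>k::nat. - c \<noteq> of_nat k"
  shows "summable (\<lambda>n. kummer_coeff a c n * z ^ n)"
proof -
  define r where "r n = (a + of_nat n) / ((of_nat n + 1) * (c + of_nat n)) * z" for n
  obtain N where N: "\<And>n. n \<ge> N \<Longrightarrow> norm (r n) < 1/2"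
    using LIMSEQ_D[OF tendsto_mult_left_zero[OF kummer_ratio_tendsto_0[of a c]], of "1/2" z]
    unfolding r_def by auto
  show ?thesis
  proof (rule summable_ratio_test[of "1/2" N])
    fix n assume "n \<ge> N"
    have "kummer_coeff a c (Suc n) * z ^ Suc n = r n * (kummer_coeff a c n * z ^ n)"
      by (simp add: r_def kummer_coeff_Suc[OF hc])
    then have "norm (kummer_coeff a c (Suc n) * z ^ Suc n)
        = norm (r n) * norm (kummer_coeff a c n * z ^ n)"
      by (simp only: norm_mult)
    also have "\<dots> \<le> 1/2 * norm (kummer_coeff a c n * z ^ n)"
      using N[OF \<open>n \<ge> N\<close>] by (intro mult_right_mono) simp_all
    finally show "norm (kummer_coeff a c (Suc n) * z ^ Suc n)
        \<le> 1/2 * norm (kummer_coeff a c n * z ^ n)" .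
  qed simp
qed

lemma kummerM_has_fps_expansion:
  assumes "\<forall>k::nat. - c \<noteq> of_nat k"
  shows "kummerM a c has_fps_expansion kummer_fps a c"
proof -
  have "fps_conv_radius (kummer_fps a c) = \<infinity>"
    unfolding fps_conv_radius_def kummer_fps_def
    by (simp add: conv_radius_inftyI'' summable_kummer_series[OF assms])
  moreover have "eval_fps (kummer_fps a c) = kummerM a c"
    by (simp add: fun_eq_iff eval_fps_def kummerM_def kummer_coeff_def kummer_fps_def)
  ultimately show ?thesis unfolding has_fps_expansion_def by simp
qed

lemma sums_coeff_eq_fps_nth:
  fixes f :: "complex \<Rightarrow> complex"
  assumes "\<And>z. (\<lambda>n. u n * z ^ n) sums f z" and "f has_fps_expansion F"
  shows "u n = fps_nth F n"
proof -
  have "fps_conv_radius (Abs_fps u) = \<infinity>"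
    unfolding fps_conv_radius_def using assms(1) by (auto intro: conv_radius_inftyI'' sums_summable)
  moreover have "eval_fps (Abs_fps u) = f"
    using assms(1) by (simp add: fun_eq_iff eval_fps_def sums_iff)
  ultimately have "f has_fps_expansion Abs_fps u"
    unfolding has_fps_expansion_def by simp
  then show ?thesis
    using fps_nth_fps_expansion[OF assms(2), of n] fps_nth_fps_expansion[of f "Abs_fps u" n] by simp
qed

lemma kummer_fps_ode:
  assumes hc: "\<forall>k::nat. - c \<noteq> of_nat k"
  shows "fps_X * fps_deriv (fps_deriv (kummer_fps a c)) + (fps_const c - fps_X) * fps_deriv (kummer_fps a c)
       = fps_const a * kummer_fps a c" (is "?lhs = ?rhs")
proof (rule fps_ext)
  fix n
  have "(of_nat n + 1) * (c + of_nat n) \<noteq> 0"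
    using add_of_nat_neq_0[OF hc, of n] of_nat_neq_0[of n] by (simp add: ac_simps)
  then have "(of_nat n + 1) * (c + of_nat n) * kummer_coeff a c (Suc n)
      = (a + of_nat n) * kummer_coeff a c n"
    by (simp add: kummer_coeff_Suc[OF hc])
  then show "fps_nth ?lhs n = fps_nth ?rhs n"
    by (cases n) (simp_all add: kummer_fps_def algebra_simps)
qed

lemma kummer_ode_fps_exp_mult:
  fixes F :: "'a::field_char_0 fps" and q :: 'a
  assumes "fps_X * fps_deriv (fps_deriv F) + (fps_const c - fps_X) * fps_deriv F = fps_const a * F"
  defines "V \<equiv> fps_exp q * F"
  shows "fps_X * fps_deriv (fps_deriv V) + (fps_const c - fps_const (1 + 2*q) * fps_X) * fps_deriv V
           + fps_const (q*(q + 1)) * fps_X * V = fps_const (q*c + a) * V"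
proof -
  have "fps_deriv V = fps_const q * V + fps_exp q * fps_deriv F"
    by (simp add: V_def algebra_simps)
  moreover have "fps_deriv (fps_deriv V)
      = fps_const q * fps_deriv V + fps_const q * fps_exp q * fps_deriv F + fps_exp q * fps_deriv (fps_deriv F)"
    by (simp add: calculation algebra_simps)
  ultimately show ?thesis
    using assms(1)
    unfolding V_def fps_const_add[symmetric] fps_const_mult[symmetric]
      fps_numeral_fps_const[symmetric] fps_const_1_eq_1
    by algebra
qed

lemma fps_ode_coeff_recurrence:
  fixes V :: "'a::idom fps"
  assumes "fps_X * fps_deriv (fps_deriv V) + (fps_const c - fps_const b * fps_X) * fps_deriv V
           + fps_const d * fps_X * V = fps_const e * V"
  shows "(of_nat n + 2) * (of_nat n + 1 + c) * fps_nth V (n + 2)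
         = (b * (of_nat n + 1) + e) * fps_nth V (n + 1) - d * fps_nth V n"
proof -
  have "fps_nth (fps_X * fps_deriv (fps_deriv V) + (fps_const c - fps_const b * fps_X) * fps_deriv V
           + fps_const d * fps_X * V) (n + 1) = fps_nth (fps_const e * V) (n + 1)"
    using assms by (rule arg_cong)
  then show ?thesis
    by (simp add: left_diff_distrib mult.assoc) algebra
qed

definition three_term_residual ::
    "complex \<Rightarrow> complex \<Rightarrow> complex \<Rightarrow> (nat \<Rightarrow> complex) \<Rightarrow> nat \<Rightarrow> complex" where
  "three_term_residual a c q w m =
     (of_nat m + 2) * (of_nat m + 1 + c) * w (m + 2)
     - ((1 + 2*q) * (of_nat m + 1) + q*c + a) * w (m + 1) + q*(q + 1) * w m"

lemma three_term_residual_exp_kummer: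
  assumes "\<forall>k::nat. - c \<noteq> of_nat k"
  shows "three_term_residual a c q (fps_nth (fps_exp q * kummer_fps a c)) m = 0"
  using fps_ode_coeff_recurrence[OF kummer_ode_fps_exp_mult[OF kummer_fps_ode[OF assms]], of m]
  unfolding three_term_residual_def by simp

definition six_term_residual ::
    "complex \<Rightarrow> complex \<Rightarrow> complex \<Rightarrow> (nat \<Rightarrow> complex) \<Rightarrow> nat \<Rightarrow> complex" where
  "six_term_residual a c p w n =
     w (n + 1) - (beta0 a c p n * w n + beta1 a c p n * w (n - 1) + beta2 a c p n * w (n - 2)
       + beta3 a c p n * w (n - 3) + beta4 a c p n * w (n - 4) + beta5 a c p n * w (n - 5))"

lemma six_term_residual_lincomb:
  "six_term_residual a c p (\<lambda>m. s * v m + t * w m) n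
     = s * six_term_residual a c p v n + t * six_term_residual a c p w n"
  unfolding six_term_residual_def by (simp add: algebra_simps)

text \<open>The multipliers below contain odd powers of \<open>q\<close>, but the combination they produce
  depends on \<open>q\<close> only through \<open>q\<^sup>2 = -p\<^sup>2\<close>; this is why one recurrence serves both
  \<open>q = \<i>p\<close> and \<open>q = -\<i>p\<close>.\<close>

lemma three_term_elimination:
  fixes a c p q :: complex and w :: "nat \<Rightarrow> complex"
  assumes hq: "q^2 = - (p^2)" and hD: "Dn c (k + 5) \<noteq> 0"
  defines "x \<equiv> of_nat k + 5 :: complex"
  shows "Dn c (k + 5) * six_term_residual a c p w (k + 5)
    = x*c*(c - 2)*(x + c - 1) * three_term_residual a c q w (k + 4)
      + (a*(4*x^2 + 4*x*c - 16*x - c^2 - 4*c + 16) - c*(2*x^2 + 3*x*c - 10*x - 4*c + 10)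
         + q*c*(c - 2)*(2*x + c)) * three_term_residual a c q w (k + 3)
      + (x^2 - 4*x*a + 3*x*c - 7*x - 4*a^2 + 2*a*c + 10*a - 8*c + 12
         + q*(8*x*a - 4*x*c + 4*a*c - 16*a - 3*c^2 + 10*c)
         - q^2*(4*x^2 + 4*x*c - 28*x - c^2 - 10*c + 48)) * three_term_residual a c q w (k + 2)
      + (a*(8*q^2 - 4*q - 1) - c*q*(4*q^2 + 2*q - 3) - (x - 4)*(2*q - 1)^2*(2*q + 1))
         * three_term_residual a c q w (k + 1)
      - q*(q - 1)*(2*q - 1)*(2*q + 1) * three_term_residual a c q w k" (is "_ = ?rhs")
proof -
  define n where "n = k + 5"
  have xn: "x = of_nat n" unfolding x_def n_def by simp
  have hp2: "p^2 = - (q^2)"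
    using hq by simp
  have hp4: "p^4 = q^4"
    using arg_cong[OF hp2, of "\<lambda>t. t^2"] by (simp flip: power_mult)
  have Dx: "Dn c n = (c - 2) * c * x * (x + 1) * (c + x - 1) * (c + x)"
    unfolding Dn_def xn Let_def ..
  have nz: "c - 2 \<noteq> 0" "c \<noteq> 0" "x \<noteq> 0" "x + 1 \<noteq> 0" "c + x - 1 \<noteq> 0" "c + x \<noteq> 0"
    using hD unfolding n_def[symmetric] Dx by auto
  have cancel: "Dn c n * (N / Dn c n) = N" for N
    using hD unfolding n_def[symmetric] by simp
  have cancel0: "Dn c n * (N / ((c - 2) * c * (x + 1) * (c + x))) = N * (x * (c + x - 1))" for N
  proof -
    have "Dn c n = ((c - 2) * c * (x + 1) * (c + x)) * (x * (c + x - 1))"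
      unfolding Dx by (simp only: mult_ac)
    then show ?thesis using nz by simp
  qed
  have shifts: "k + 4 + 2 = k + 6" "k + 4 + 1 = k + 5" "k + 3 + 2 = k + 5" "k + 3 + 1 = k + 4"
    "k + 2 + 2 = k + 4" "k + 2 + 1 = k + 3" "k + 1 + 2 = k + 3" "k + 1 + 1 = k + 2"
    and back_shifts: "n + 1 = k + 6" "n - 1 = k + 4" "n - 2 = k + 3" "n - 3 = k + 2" "n - 4 = k + 1" "n - 5 = k"
    unfolding n_def by simp_all
  have kx: "of_nat k = x - 5" unfolding x_def by simp
  have "Dn c (k + 5) * six_term_residual a c p w (k + 5)
     = Dn c n * w (k + 6) - (Dn c n * beta0 a c p n * w (k + 5) + Dn c n * beta1 a c p n * w (k + 4)
           + Dn c n * beta2 a c p n * w (k + 3) + Dn c n * beta3 a c p n * w (k + 2)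
           + Dn c n * beta4 a c p n * w (k + 1) + Dn c n * beta5 a c p n * w k)"
    unfolding n_def[symmetric] six_term_residual_def back_shifts
    by (simp only: right_diff_distrib distrib_left mult.assoc)
  also have "\<dots> = ?rhs"
    unfolding beta0_def beta1_def beta2_def beta3_def beta4_def beta5_def Let_def xn[symmetric]
      cancel cancel0
    unfolding Dx hp2 hp4 three_term_residual_def shifts of_nat_add of_nat_numeral of_nat_1 kx
    by algebra
  finally show ?thesis .
qed

lemma six_term_recurrence_of_three_term:
  fixes a c p q :: complex and w :: "nat \<Rightarrow> complex"
  assumes "q^2 = - (p^2)" and "Dn c n \<noteq> 0" and "n \<ge> 5"
    and "\<And>m. three_term_residual a c q w m = 0"
  shows "six_term_residual a c p w n = 0"
proof -
  obtain k where "n = k + 5"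
    using \<open>n \<ge> 5\<close> by (metis add.commute le_Suc_ex)
  then show ?thesis
    using three_term_elimination[of q p c k a w] assms by simp
qed

lemma Dn_neq_0:
  assumes "\<forall>k::nat. - c \<noteq> of_nat k" and "c \<noteq> 2" and "n \<ge> 1"
  shows "Dn c n \<noteq> 0"
proof -
  have "c + of_nat n - 1 = c + of_nat (n - 1)"
    using \<open>n \<ge> 1\<close> by (simp add: of_nat_diff)
  then have "c + of_nat n - 1 \<noteq> 0"
    using add_of_nat_neq_0[OF assms(1), of "n - 1"] by metis
  moreover have "c \<noteq> 0" "c + of_nat n \<noteq> 0"
    using add_of_nat_neq_0[OF assms(1), of 0] add_of_nat_neq_0[OF assms(1), of n] by simp_all
  moreover have "of_nat n \<noteq> (0::complex)" "of_nat n + 1 \<noteq> (0::complex)"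
    using \<open>n \<ge> 1\<close> of_nat_neq_0[of n] by (simp_all add: ac_simps)
  ultimately show ?thesis
    using \<open>c \<noteq> 2\<close> unfolding Dn_def Let_def by simp
qed

lemma fps_nth_cos_mult:
  fixes F :: "complex fps"
  shows "fps_nth (fps_cos p * F) n
           = (fps_nth (fps_exp (\<i>*p) * F) n + fps_nth (fps_exp (-\<i>*p) * F) n) / 2"
proof -
  have "fps_const 2 * fps_cos p = fps_exp (\<i>*p) + fps_exp (-\<i>*p)"
    unfolding fps_cos_fps_exp_ii by (simp flip: mult.assoc)
  then have "fps_const 2 * (fps_cos p * F) = fps_exp (\<i>*p) * F + fps_exp (-\<i>*p) * F"
    by (simp only: mult.assoc[symmetric] distrib_right)
  then have "2 * fps_nth (fps_cos p * F) n
      = fps_nth (fps_exp (\<i>*p) * F) n + fps_nth (fps_exp (-\<i>*p) * F) n"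
    by (metis fps_add_nth fps_mult_left_const_nth)
  then show ?thesis
    by (simp add: field_simps ac_simps)
qed

lemma fps_nth_cos_mult_initial:
  fixes F :: "complex fps"
  shows "fps_nth (fps_cos p * F) 0 = fps_nth F 0"
    and "fps_nth (fps_cos p * F) 1 = fps_nth F 1"
    and "fps_nth (fps_cos p * F) 2 = fps_nth F 2 - p^2/2 * fps_nth F 0"
    and "fps_nth (fps_cos p * F) 3 = fps_nth F 3 - p^2/2 * fps_nth F 1"
    and "fps_nth (fps_cos p * F) 4 = fps_nth F 4 - p^2/2 * fps_nth F 2 + p^4/24 * fps_nth F 0"
    and "fps_nth (fps_cos p * F) 5 = fps_nth F 5 - p^2/2 * fps_nth F 3 + p^4/24 * fps_nth F 1"
  by (simp_all add: fps_mult_nth atLeast0AtMost atMost_nat_numeral fps_cos_def fact_numeral)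

lemma cos_mult_kummer_recurrence:
  assumes "\<forall>k::nat. - c \<noteq> of_nat k" and "c \<noteq> 2" and "n \<ge> 5"
  shows "six_term_residual a c p (fps_nth (fps_cos p * kummer_fps a c)) n = 0"
proof -
  have exp: "six_term_residual a c p (fps_nth (fps_exp q * kummer_fps a c)) n = 0"
    if "q^2 = - (p^2)" for q
    using six_term_recurrence_of_three_term[OF that Dn_neq_0[OF assms(1,2)] assms(3)]
      three_term_residual_exp_kummer[OF assms(1)] assms(3) by simp
  have cos: "fps_nth (fps_cos p * kummer_fps a c)
      = (\<lambda>m. 1/2 * fps_nth (fps_exp (\<i> * p) * kummer_fps a c) m
             + 1/2 * fps_nth (fps_exp (- \<i> * p) * kummer_fps a c) m)"
    unfolding fps_nth_cos_mult by (simp add: fun_eq_iff)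
  show ?thesis
    unfolding cos six_term_residual_lincomb by (simp add: exp power_mult_distrib)
qed

lemma cos_mult_kummer_initial:
  fixes a c p :: complex
  assumes "\<forall>k::nat. - c \<noteq> of_nat k"
  defines "w \<equiv> fps_nth (fps_cos p * kummer_fps a c)"
  shows "w 0 = 1 \<and>
    w 1 = a / c \<and>
    w 2 = (1/2) * ((a^2 + a) / (c^2 + c) - p^2) \<and>
    w 3 = a / (6*c) * ((a + 1)*(a + 2) / ((c + 1)*(c + 2)) - 3*p^2) \<and>
    w 4 = (1/24) * (- (6*a*(a + 1)*p^2) / (c*(c + 1))
              + a*(a + 1)*(a + 2)*(a + 3) / (c*(c + 1)*(c + 2)*(c + 3)) + p^4) \<and>
    w 5 = a / (120*c) * (- (10*(a + 1)*(a + 2)*p^2) / ((c + 1)*(c + 2))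
              + (a + 1)*(a + 2)*(a + 3)*(a + 4) / ((c + 1)*(c + 2)*(c + 3)*(c + 4)) + 5*p^4)"
proof -
  \<comment> \<open>Naming \<open>c + 1\<close>, ..., \<open>c + 4\<close> stops \<open>field_simps\<close> from multiplying out the denominators
    before it can cancel them.\<close>
  define c1 c2 c3 c4 where "c1 = c + 1" and "c2 = c + 2" and "c3 = c + 3" and "c4 = c + 4"
  have "c + of_nat j \<noteq> 0" for j
    using add_of_nat_neq_0[OF assms(1)] .
  from this[of 0] this[of 1] this[of 2] this[of 3] this[of 4]
  have nz: "c \<noteq> 0" "c1 \<noteq> 0" "c2 \<noteq> 0" "c3 \<noteq> 0" "c4 \<noteq> 0"
    by (simp_all add: c1_def c2_def c3_def c4_def)
  have "c^2 + c = c * c1" "a^2 + a = a * (a + 1)"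
    by (simp_all add: c1_def power2_eq_square algebra_simps)
  then show ?thesis
    unfolding w_def fps_nth_cos_mult_initial kummer_fps_def fps_nth_Abs_fps kummer_coeff_initial
    unfolding c1_def[symmetric] c2_def[symmetric] c3_def[symmetric] c4_def[symmetric]
    using nz by (simp add: field_simps)
qed

theorem theorem2p8:
  fixes a c p :: complex and u :: "nat \<Rightarrow> complex"
  assumes hc: "\<forall>k::nat. - c \<noteq> of_nat k"
    and hc2: "c \<noteq> 2"
    and hu: "\<forall>z. (\<lambda>n. u n * z ^ n) sums (cos (p * z) * kummerM a c z)"
  shows "u 0 = 1 \<and>
    u 1 = a / c \<and>
    u 2 = (1/2) * ((a^2 + a) / (c^2 + c) - p^2) \<and>
    u 3 = a / (6*c) * ((a + 1)*(a + 2) / ((c + 1)*(c + 2)) - 3*p^2) \<and>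
    u 4 = (1/24) * (- (6*a*(a + 1)*p^2) / (c*(c + 1))
              + a*(a + 1)*(a + 2)*(a + 3) / (c*(c + 1)*(c + 2)*(c + 3)) + p^4) \<and>
    u 5 = a / (120*c) * (- (10*(a + 1)*(a + 2)*p^2) / ((c + 1)*(c + 2))
              + (a + 1)*(a + 2)*(a + 3)*(a + 4) / ((c + 1)*(c + 2)*(c + 3)*(c + 4)) + 5*p^4) \<and>
    (\<forall>n::nat. n \<ge> 5 \<longrightarrow> u (n + 1) =
           beta0 a c p n * u n + beta1 a c p n * u (n - 1) + beta2 a c p n * u (n - 2)
           + beta3 a c p n * u (n - 3) + beta4 a c p n * u (n - 4) + beta5 a c p n * u (n - 5))"
proof -
  have "(\<lambda>z. cos (p * z) * kummerM a c z) has_fps_expansion fps_cos p * kummer_fps a c"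
    by (intro has_fps_expansion_mult has_fps_expansion_cos kummerM_has_fps_expansion hc)
  then have "u = fps_nth (fps_cos p * kummer_fps a c)"
    using hu by (intro ext sums_coeff_eq_fps_nth) auto
  then show ?thesis
    using cos_mult_kummer_initial[OF hc] cos_mult_kummer_recurrence[OF hc hc2]
    unfolding six_term_residual_def by simp
qed

end
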